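(* Let $(X,d,\alpha)$ be a computable metric space. Let $S$ be a compact subset of $(X,d)$ and suppose $A_1,\dots,A_n$ are subsets of $S$ such that $S=A_1\cup\dots\cup A_n$ and such that $A_i$ is computable up to $S$ for each $i\in\{1,\dots,n\}$. Then $S$ is a computable compact set.
   Context: A computable metric space is a triple $(X,d,\alpha)$ where $(X,d)$ is a metric space and $\alpha=(\alpha_i)_{i\in\mathbb N}$ is a sequence with dense range in $(X,d)$ such that $(i,j)\mapsto d(\alpha_i,\alpha_j)$ is a computable function $\mathbb N^2\to\mathbb R$ (a function $g:\mathbb N^k\to\mathbb R$ is computable if there is a computable $G:\mathbb N^{k+1}\to\mathbb Q$ with $|g(x)-G(x,i)|<2^{-i}$ for all $x,i$). Fix a computable $q:\mathbb N\to\mathbb Q$ whose image is the set of positive rationals and computable $\tau_1,\tau_2:\mathbb N\to\mathbb N$ with $\{(\tau_1(i),\tau_2(i)):i\in\mathbb N\}=\mathbb N^2$; let $\lambda_i=\alpha_{\tau_1(i)}$, $\rho_i=q_{\tau_2(i)}$, $I_i=B(\lambda_i,\rho_i)$ (open ball). Fix computable $\sigma:\mathbb N^2\to\mathbb N$, $\eta:\mathbb N\to\mathbb N$ such that $\{(\sigma(j,0),\dots,\sigma(j,\eta(j))):j\in\mathbb N\}$ is the set of all nonempty finite sequences in $\mathbb N$; let $[j]=\{\sigma(j,i):0\le i\le\eta(j)\}$, $J_j=\bigcup_{i\in[j]}I_i$ and $\Lambda_j=\{\alpha_i:i\in[j]\}$. A compact $K$ is a computable compact set if $\{j:K\subseteq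 J_j\}$ and $\{i:K\cap I_i\ne\emptyset\}$ are computably enumerable. For $A,B\subseteq X$ and $\varepsilon>0$ write $A\prec_\varepsilon B$ if for each $a\in A$ there is $b\in B$ with $d(a,b)<\varepsilon$. For $A\subseteq S\subseteq X$, $A$ is computable up to $S$ if there is a computable $f:\mathbb N\to\mathbb N$ with $A\prec_{2^{-k}}\Lambda_{f(k)}$ and $\Lambda_{f(k)}\prec_{2^{-k}}S$ for all $k\in\mathbb N$. *)

theory Defs
  imports "HOL-Analysis.Analysis"
begin

text \<open>A function of arity n is represented as a function on
lists of naturals; only its values on lists of length n matter.\<close>

inductive recfn :: "nat \<Rightarrow> (nat list \<Rightarrow> nat) \<Rightarrow> bool" where
  rf_zero: "recfn n (\<lambda>_. 0)"
| rf_succ: "recfn 1 (\<lambda>xs. Suc (hd xs))"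
| rf_proj: "i < n \<Longrightarrow> recfn n (\<lambda>xs. xs ! i)"
| rf_comp: "recfn m f \<Longrightarrow> length gs = m \<Longrightarrow> (\<forall>g\<in>set gs. recfn n g)
            \<Longrightarrow> recfn n (\<lambda>xs. f (map (\<lambda>g. g xs) gs))"
| rf_prim: "recfn n f \<Longrightarrow> recfn (Suc (Suc n)) g
            \<Longrightarrow> recfn (Suc n) (\<lambda>xs. rec_nat (f (tl xs)) (\<lambda>y r. g (y # r # tl xs)) (hd xs))"
| rf_mu: "recfn (Suc n) f \<Longrightarrow> (\<forall>xs. length xs = n \<longrightarrow> (\<exists>y. f (y # xs) = 0))
            \<Longrightarrow> recfn n (\<lambda>xs. LEAST y. f (y # xs) = 0)"

definition computable1 :: "(nat \<Rightarrow> nat) \<Rightarrow> bool" where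
  "computable1 f \<longleftrightarrow> (\<exists>h. recfn 1 h \<and> (\<forall>x. h [x] = f x))"

definition computable2 :: "(nat \<Rightarrow> nat \<Rightarrow> nat) \<Rightarrow> bool" where
  "computable2 f \<longleftrightarrow> (\<exists>h. recfn 2 h \<and> (\<forall>x y. h [x, y] = f x y))"

definition computable3 :: "(nat \<Rightarrow> nat \<Rightarrow> nat \<Rightarrow> nat) \<Rightarrow> bool" where
  "computable3 f \<longleftrightarrow> (\<exists>h. recfn 3 h \<and> (\<forall>x y z. h [x, y, z] = f x y z))"

definition computable_rat1 :: "(nat \<Rightarrow> rat) \<Rightarrow> bool" where
  "computable_rat1 g \<longleftrightarrow> (\<exists>a b c. computable1 a \<and> computable1 b \<and> computable1 c \<and>
     (\<forall>x. g x = (of_nat (a x) - of_nat (b x)) / of_nat (c x + 1)))"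

definition computable_rat3 :: "(nat \<Rightarrow> nat \<Rightarrow> nat \<Rightarrow> rat) \<Rightarrow> bool" where
  "computable_rat3 g \<longleftrightarrow> (\<exists>a b c. computable3 a \<and> computable3 b \<and> computable3 c \<and>
     (\<forall>x y z. g x y z = (of_nat (a x y z) - of_nat (b x y z)) / of_nat (c x y z + 1)))"

definition computable_real2 :: "(nat \<Rightarrow> nat \<Rightarrow> real) \<Rightarrow> bool" where
  "computable_real2 g \<longleftrightarrow> (\<exists>G. computable_rat3 G \<and>
     (\<forall>x y i. \<bar>g x y - real_of_rat (G x y i)\<bar> < 1 / 2 ^ i))"

definition ce_set :: "nat set \<Rightarrow> bool" where
  "ce_set A \<longleftrightarrow> A = {} \<or> (\<exists>f. computable1 f \<and> A = range f)"

definition computable_metric_space :: "(nat \<Rightarrow> 'a::metric_space) \<Rightarrow> bool" where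
  "computable_metric_space \<alpha> \<longleftrightarrow> closure (range \<alpha>) = UNIV \<and>
     computable_real2 (\<lambda>i j. dist (\<alpha> i) (\<alpha> j))"

definition standard_enums ::
  "(nat \<Rightarrow> rat) \<Rightarrow> (nat \<Rightarrow> nat) \<Rightarrow> (nat \<Rightarrow> nat) \<Rightarrow> (nat \<Rightarrow> nat \<Rightarrow> nat) \<Rightarrow> (nat \<Rightarrow> nat) \<Rightarrow> bool" where
  "standard_enums q \<tau>1 \<tau>2 \<sigma> \<eta> \<longleftrightarrow>
     computable_rat1 q \<and> range q = {r. r > 0} \<and>
     computable1 \<tau>1 \<and> computable1 \<tau>2 \<and> range (\<lambda>i. (\<tau>1 i, \<tau>2 i)) = UNIV \<and>
     computable2 \<sigma> \<and> computable1 \<eta> \<and>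
     range (\<lambda>j. map (\<sigma> j) [0..<Suc (\<eta> j)]) = {xs. xs \<noteq> []}"

definition ratball :: "(nat \<Rightarrow> 'a::metric_space) \<Rightarrow> (nat \<Rightarrow> rat) \<Rightarrow> (nat \<Rightarrow> nat) \<Rightarrow> (nat \<Rightarrow> nat) \<Rightarrow> nat \<Rightarrow> 'a set" where
  "ratball \<alpha> q \<tau>1 \<tau>2 i = ball (\<alpha> (\<tau>1 i)) (real_of_rat (q (\<tau>2 i)))"

definition seqidx :: "(nat \<Rightarrow> nat \<Rightarrow> nat) \<Rightarrow> (nat \<Rightarrow> nat) \<Rightarrow> nat \<Rightarrow> nat set" where
  "seqidx \<sigma> \<eta> j = {\<sigma> j i | i. i \<le> \<eta> j}"

definition ratunion :: "(nat \<Rightarrow> 'a::metric_space) \<Rightarrow> (nat \<Rightarrow> rat) \<Rightarrow> (nat \<Rightarrow> nat) \<Rightarrow> (nat \<Rightarrow> nat)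
     \<Rightarrow> (nat \<Rightarrow> nat \<Rightarrow> nat) \<Rightarrow> (nat \<Rightarrow> nat) \<Rightarrow> nat \<Rightarrow> 'a set" where
  "ratunion \<alpha> q \<tau>1 \<tau>2 \<sigma> \<eta> j = (\<Union>i\<in>seqidx \<sigma> \<eta> j. ratball \<alpha> q \<tau>1 \<tau>2 i)"

definition ptset :: "(nat \<Rightarrow> 'a) \<Rightarrow> (nat \<Rightarrow> nat \<Rightarrow> nat) \<Rightarrow> (nat \<Rightarrow> nat) \<Rightarrow> nat \<Rightarrow> 'a set" where
  "ptset \<alpha> \<sigma> \<eta> j = \<alpha> ` seqidx \<sigma> \<eta> j"

definition approx_prec :: "'a::metric_space set \<Rightarrow> 'a set \<Rightarrow> real \<Rightarrow> bool" where
  "approx_prec A B \<epsilon> \<longleftrightarrow> (\<forall>a\<in>A. \<exists>b\<in>B. dist a b < \<epsilon>)"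

definition computable_compact_set ::
  "(nat \<Rightarrow> 'a::metric_space) \<Rightarrow> (nat \<Rightarrow> rat) \<Rightarrow> (nat \<Rightarrow> nat) \<Rightarrow> (nat \<Rightarrow> nat)
     \<Rightarrow> (nat \<Rightarrow> nat \<Rightarrow> nat) \<Rightarrow> (nat \<Rightarrow> nat) \<Rightarrow> 'a set \<Rightarrow> bool" where
  "computable_compact_set \<alpha> q \<tau>1 \<tau>2 \<sigma> \<eta> K \<longleftrightarrow> compact K \<and>
     ce_set {j. K \<subseteq> ratunion \<alpha> q \<tau>1 \<tau>2 \<sigma> \<eta> j} \<and>
     ce_set {i. K \<inter> ratball \<alpha> q \<tau>1 \<tau>2 i \<noteq> {}}"

definition computable_up_to ::
  "(nat \<Rightarrow> 'a::metric_space) \<Rightarrow> (nat \<Rightarrow> nat \<Rightarrow> nat) \<Rightarrow> (nat \<Rightarrow> nat) \<Rightarrow> 'a set \<Rightarrow> 'a set \<Rightarrow> bool" where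
  "computable_up_to \<alpha> \<sigma> \<eta> A S \<longleftrightarrow> (\<exists>f. computable1 f \<and>
     (\<forall>k. approx_prec A (ptset \<alpha> \<sigma> \<eta> (f k)) (1 / 2 ^ k) \<and>
          approx_prec (ptset \<alpha> \<sigma> \<eta> (f k)) S (1 / 2 ^ k)))"

end

theory Submission
  imports Defs
begin

text \<open>For every \<open>k\<close>, the finite sets \<open>\<Lambda>\<close> approximating the \<open>A i\<close> at precision \<open>2^-k\<close> together form a
  \<open>2^-k\<close>-net of \<open>S\<close> whose points are \<open>2^-k\<close>-close to \<open>S\<close>, and this family of nets is computable in \<open>k\<close>.
  Approximating distances at precision \<open>2^-k\<close> gives a decidable test certifying that a net point
  lies \<open>2^-k\<close>-deep inside a rational ball. Then \<open>S \<subseteq> J j\<close> iff for some \<open>k\<close> every net point of level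
  \<open>k\<close> is certified deep inside a ball of \<open>J j\<close> (the forward direction uses a uniform margin coming
  from compactness), and \<open>S\<close> meets \<open>I b\<close> iff for some \<open>k\<close> some net point of level \<open>k\<close> is certified
  deep inside \<open>I b\<close>. Both index sets are thus projections of decidable relations, hence c.e.\<close>

definition recursive :: "nat \<Rightarrow> (nat list \<Rightarrow> nat) \<Rightarrow> bool" where
  "recursive n f \<longleftrightarrow> (\<exists>h. recfn n h \<and> (\<forall>xs. length xs = n \<longrightarrow> h xs = f xs))"

definition decidable :: "nat \<Rightarrow> (nat list \<Rightarrow> bool) \<Rightarrow> bool" where
  "decidable n P \<longleftrightarrow> recursive n (\<lambda>xs. of_bool (P xs))"

lemma recursive_cong:
  "recursive n f \<Longrightarrow> (\<And>xs. length xs = n \<Longrightarrow> f xs = g xs) \<Longrightarrow> recursive n g"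
  unfolding recursive_def by metis

lemma recursive_zero: "recursive n (\<lambda>_. 0)"
  unfolding recursive_def using rf_zero by blast

lemma recursive_proj: "i < n \<Longrightarrow> recursive n (\<lambda>xs. xs ! i)"
  unfolding recursive_def using rf_proj by blast

lemma recursive_comp:
  assumes "recursive m f" "length gs = m" "\<forall>g\<in>set gs. recursive n g"
  shows "recursive n (\<lambda>xs. f (map (\<lambda>g. g xs) gs))"
proof -
  obtain hf where hf: "recfn m hf" "\<forall>xs. length xs = m \<longrightarrow> hf xs = f xs"
    using assms(1) recursive_def by blast
  obtain H where H: "\<forall>g\<in>set gs. recfn n (H g) \<and> (\<forall>xs. length xs = n \<longrightarrow> H g xs = g xs)"
    using assms(3) unfolding recursive_def by metis
  have "recfn n (\<lambda>xs. hf (map (\<lambda>h. h xs) (map H gs)))"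
    using rf_comp[OF hf(1), of "map H gs" n] assms(2) H by auto
  moreover have "hf (map (\<lambda>h. h xs) (map H gs)) = f (map (\<lambda>g. g xs) gs)" if "length xs = n" for xs
    using H hf(2) assms(2) that by (simp cong: map_cong)
  ultimately show ?thesis
    unfolding recursive_def by blast
qed

lemma recursive_rec:
  assumes "recursive n f" "recursive (Suc (Suc n)) g"
  shows "recursive (Suc n) (\<lambda>xs. rec_nat (f (tl xs)) (\<lambda>y r. g (y # r # tl xs)) (hd xs))"
proof -
  obtain hf where hf: "recfn n hf" "\<forall>xs. length xs = n \<longrightarrow> hf xs = f xs"
    using assms(1) recursive_def by blast
  obtain hg where hg: "recfn (Suc (Suc n)) hg" "\<forall>xs. length xs = Suc (Suc n) \<longrightarrow> hg xs = g xs"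
    using assms(2) recursive_def by blast
  have "rec_nat (hf t) (\<lambda>y r. hg (y # r # t)) m = rec_nat (f t) (\<lambda>y r. g (y # r # t)) m"
    if "length t = n" for t m
    using that hf(2) hg(2) by (induct m) auto
  with rf_prim[OF hf(1) hg(1)] show ?thesis
    unfolding recursive_def by (intro exI conjI) auto
qed

lemma length_Suc_0_conv_nth: "length xs = Suc 0 \<Longrightarrow> xs = [xs ! 0]"
  by (cases xs) auto

lemma length_2_conv_nth: "length xs = 2 \<Longrightarrow> xs = [xs ! 0, xs ! 1]"
  by (cases xs; cases "tl xs") auto

lemma length_3_conv_nth: "length xs = 3 \<Longrightarrow> xs = [xs ! 0, xs ! 1, xs ! 2]"
  by (cases xs; cases "tl xs"; cases "tl (tl xs)") (auto simp: numeral_3_eq_3)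

lemma computable1_iff_recursive: "computable1 f \<longleftrightarrow> recursive 1 (\<lambda>xs. f (xs ! 0))"
proof
  assume "computable1 f"
  then obtain h where "recfn 1 h" "\<forall>x. h [x] = f x"
    unfolding computable1_def by blast
  then show "recursive 1 (\<lambda>xs. f (xs ! 0))"
    unfolding recursive_def by (metis One_nat_def length_Suc_0_conv_nth)
qed (auto simp: computable1_def recursive_def)

lemma computable2_iff_recursive: "computable2 f \<longleftrightarrow> recursive 2 (\<lambda>xs. f (xs ! 0) (xs ! 1))"
proof
  assume "computable2 f"
  then obtain h where "recfn 2 h" "\<forall>x y. h [x, y] = f x y"
    unfolding computable2_def by blast
  then show "recursive 2 (\<lambda>xs. f (xs ! 0) (xs ! 1))"
    unfolding recursive_def by (metis length_2_conv_nth)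
qed (auto simp: computable2_def recursive_def)

lemma computable3_iff_recursive:
  "computable3 f \<longleftrightarrow> recursive 3 (\<lambda>xs. f (xs ! 0) (xs ! 1) (xs ! 2))"
proof
  assume "computable3 f"
  then obtain h where "recfn 3 h" "\<forall>x y z. h [x, y, z] = f x y z"
    unfolding computable3_def by blast
  then show "recursive 3 (\<lambda>xs. f (xs ! 0) (xs ! 1) (xs ! 2))"
    unfolding recursive_def by (metis length_3_conv_nth)
qed (auto simp: computable3_def recursive_def numeral_3_eq_3)

lemma recursive_computable1:
  assumes "computable1 f" "recursive n g"
  shows "recursive n (\<lambda>xs. f (g xs))"
  using recursive_comp[OF assms(1)[unfolded computable1_iff_recursive], of "[g]" n] assms(2) by simp

lemma recursive_computable2:
  assumes "computable2 f" "recursive n g1" "recursive n g2"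
  shows "recursive n (\<lambda>xs. f (g1 xs) (g2 xs))"
  using recursive_comp[OF assms(1)[unfolded computable2_iff_recursive], of "[g1, g2]" n] assms(2,3)
  by simp

lemma recursive_computable3:
  assumes "computable3 f" "recursive n g1" "recursive n g2" "recursive n g3"
  shows "recursive n (\<lambda>xs. f (g1 xs) (g2 xs) (g3 xs))"
  using recursive_comp[OF assms(1)[unfolded computable3_iff_recursive], of "[g1, g2, g3]" n] assms(2-4)
  by (simp add: numeral_3_eq_3)

lemma recursive_Suc: "recursive n f \<Longrightarrow> recursive n (\<lambda>xs. Suc (f xs))"
proof -
  have "recursive 1 (\<lambda>xs. Suc (hd xs))"
    unfolding recursive_def using rf_succ by blast
  from recursive_comp[OF this, of "[f]" n] show "recursive n f \<Longrightarrow> recursive n (\<lambda>xs. Suc (f xs))"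
    by simp
qed

lemma recursive_const: "recursive n (\<lambda>_. c)"
  by (induct c) (auto intro: recursive_zero dest: recursive_Suc)

lemma computable2_rec_nat:
  assumes "computable1 f" "computable3 g"
  shows "computable2 (\<lambda>a b. rec_nat (f b) (\<lambda>y r. g y r b) a)"
proof -
  have "recursive (Suc (Suc 0)) (\<lambda>xs. rec_nat (f (tl xs ! 0)) (\<lambda>y r. g y r (tl xs ! 0)) (hd xs))"
    using recursive_rec[OF assms(1)[unfolded computable1_iff_recursive One_nat_def]
        assms(2)[unfolded computable3_iff_recursive numeral_3_eq_3]] by simp
  then show ?thesis
    unfolding computable2_iff_recursive numeral_2_eq_2
    by (rule recursive_cong) (auto simp: length_Suc_conv)
qed

lemma computable1_rec_nat:
  assumes "computable2 g"
  shows "computable1 (rec_nat c g)"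
proof -
  have "recursive (Suc 0) (\<lambda>xs. rec_nat c (\<lambda>y r. g y r) (hd xs))"
    using recursive_rec[OF recursive_const assms[unfolded computable2_iff_recursive numeral_2_eq_2]]
    by simp
  then show ?thesis
    unfolding computable1_iff_recursive One_nat_def
    by (rule recursive_cong) (auto simp: length_Suc_conv)
qed

lemma computable1_id: "computable1 (\<lambda>x. x)"
  unfolding computable1_iff_recursive by (rule recursive_proj) simp

lemma computable2_plus: "computable2 (+)"
proof -
  have "computable3 (\<lambda>y r b. Suc r)"
    unfolding computable3_iff_recursive by (intro recursive_Suc recursive_proj) simp
  then have "computable2 (\<lambda>a b. rec_nat b (\<lambda>y r. Suc r) a)"
    by (rule computable2_rec_nat[OF computable1_id])
  moreover have "rec_nat b (\<lambda>y r. Suc r) a = a + b" for a b :: nat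
    by (induct a) auto
  ultimately show ?thesis
    by simp
qed

lemma computable2_times: "computable2 (*)"
proof -
  have "computable3 (\<lambda>y r b. r + b)"
    unfolding computable3_iff_recursive
    by (intro recursive_computable2[OF computable2_plus] recursive_proj) simp_all
  then have "computable2 (\<lambda>a b. rec_nat 0 (\<lambda>y r. r + b) a)"
    using computable2_rec_nat[of "\<lambda>_. 0"] by (simp add: computable1_iff_recursive recursive_zero)
  moreover have "rec_nat 0 (\<lambda>y r. r + b) a = a * b" for a b :: nat
    by (induct a) auto
  ultimately show ?thesis
    by simp
qed

lemma computable2_minus: "computable2 (-)"
proof -
  have "computable2 (\<lambda>y r. y)"
    unfolding computable2_iff_recursive by (intro recursive_proj) simp
  then have "computable1 (rec_nat 0 (\<lambda>y r. y))"
    by (rule computable1_rec_nat)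
  moreover have "rec_nat 0 (\<lambda>y r. y) = (\<lambda>a :: nat. a - 1)"
  proof (rule ext)
    show "rec_nat 0 (\<lambda>y r. y) a = a - 1" for a :: nat
      by (cases a) auto
  qed
  ultimately have pred: "computable1 (\<lambda>a. a - 1)"
    by (simp only:)
  have "computable3 (\<lambda>y r b. r - 1)"
    unfolding computable3_iff_recursive by (intro recursive_computable1[OF pred] recursive_proj) simp
  then have "computable2 (\<lambda>a b. rec_nat b (\<lambda>y r. r - 1) a)"
    by (rule computable2_rec_nat[OF computable1_id])
  moreover have "rec_nat b (\<lambda>y r. r - 1) a = b - a" for a b :: nat
    by (induct a) auto
  ultimately have minus_flipped: "computable2 (\<lambda>a b. b - a)"
    by (simp only:)
  have "recursive 2 (\<lambda>xs. (\<lambda>a b. b - a) (xs ! 1) (xs ! 0))"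
    by (intro recursive_computable2[OF minus_flipped] recursive_proj) simp_all
  then show ?thesis
    unfolding computable2_iff_recursive by simp
qed

lemma computable1_power2: "computable1 (\<lambda>k. 2 ^ k)"
proof -
  have "computable2 (\<lambda>y r. r + r)"
    unfolding computable2_iff_recursive
    by (intro recursive_computable2[OF computable2_plus] recursive_proj) simp_all
  then have "computable1 (rec_nat 1 (\<lambda>y r. r + r))"
    by (rule computable1_rec_nat)
  moreover have "rec_nat 1 (\<lambda>y r. r + r) = (\<lambda>k. (2 :: nat) ^ k)"
  proof (rule ext)
    show "rec_nat 1 (\<lambda>y r. r + r) k = (2 :: nat) ^ k" for k
      by (induct k) auto
  qed
  ultimately show ?thesis
    by (simp only:)
qed

lemmas recursive_plus = recursive_computable2[OF computable2_plus]
lemmas recursive_times = recursive_computable2[OF computable2_times]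
lemmas recursive_minus = recursive_computable2[OF computable2_minus]
lemmas recursive_power2 = recursive_computable1[OF computable1_power2]

lemma decidable_cong: "decidable n P \<Longrightarrow> (\<And>xs. length xs = n \<Longrightarrow> P xs = Q xs) \<Longrightarrow> decidable n Q"
  unfolding decidable_def by (erule recursive_cong) simp

lemma decidable_le:
  assumes "recursive n f" "recursive n g"
  shows "decidable n (\<lambda>xs. f xs \<le> g xs)"
proof -
  have "recursive n (\<lambda>xs. 1 - (f xs - g xs))"
    by (intro recursive_minus recursive_const assms)
  then show ?thesis
    unfolding decidable_def by (rule recursive_cong) simp
qed

lemma decidable_less: "recursive n f \<Longrightarrow> recursive n g \<Longrightarrow> decidable n (\<lambda>xs. f xs < g xs)"
  using decidable_le[of n "\<lambda>xs. Suc (f xs)" g] by (simp add: recursive_Suc Suc_le_eq)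

lemma decidable_not:
  assumes "decidable n P"
  shows "decidable n (\<lambda>xs. \<not> P xs)"
proof -
  have "recursive n (\<lambda>xs. 1 - of_bool (P xs))"
    using assms unfolding decidable_def by (intro recursive_minus recursive_const)
  then show ?thesis
    unfolding decidable_def by (rule recursive_cong) simp
qed

lemma decidable_conj:
  assumes "decidable n P" "decidable n Q"
  shows "decidable n (\<lambda>xs. P xs \<and> Q xs)"
proof -
  have "recursive n (\<lambda>xs. of_bool (P xs) * of_bool (Q xs))"
    using assms unfolding decidable_def by (intro recursive_times)
  then show ?thesis
    unfolding decidable_def by (rule recursive_cong) simp
qed

lemma decidable_imp: "decidable n P \<Longrightarrow> decidable n Q \<Longrightarrow> decidable n (\<lambda>xs. P xs \<longrightarrow> Q xs)"
  using decidable_not[of n "\<lambda>xs. P xs \<and> \<not> Q xs"] by (simp add: decidable_conj decidable_not)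

lemma decidable_eq: "recursive n f \<Longrightarrow> recursive n g \<Longrightarrow> decidable n (\<lambda>xs. f xs = g xs)"
  using decidable_conj[of n "\<lambda>xs. f xs \<le> g xs" "\<lambda>xs. g xs \<le> f xs"] by (simp add: decidable_le eq_iff)

lemma recursive_if:
  assumes "decidable n P" "recursive n f" "recursive n g"
  shows "recursive n (\<lambda>xs. if P xs then f xs else g xs)"
proof -
  have "recursive n (\<lambda>xs. of_bool (P xs) * f xs + (1 - of_bool (P xs)) * g xs)"
    using assms unfolding decidable_def by (intro recursive_plus recursive_times recursive_minus recursive_const)
  then show ?thesis
    by (rule recursive_cong) simp
qed

lemma decidable_comp:
  assumes "decidable m P" "length gs = m" "\<forall>g\<in>set gs. recursive n g"
  shows "decidable n (\<lambda>xs. P (map (\<lambda>g. g xs) gs))"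
  using recursive_comp[OF assms(1)[unfolded decidable_def] assms(2,3)] unfolding decidable_def .

lemma recursive_subst_head:
  assumes "recursive (Suc n) f" "recursive (d + n) h"
  shows "recursive (d + n) (\<lambda>xs. f (h xs # drop d xs))"
proof -
  have map_drop: "map (\<lambda>i. xs ! (d + i)) [0..<n] = drop d xs" if "length xs = d + n" for xs :: "nat list"
    using that by (intro nth_equalityI) auto
  have "recursive (d + n) (\<lambda>xs. f (map (\<lambda>g. g xs) (h # map (\<lambda>i xs. xs ! (d + i)) [0..<n])))"
    by (rule recursive_comp[OF assms(1)]) (auto intro: recursive_proj assms(2))
  then show ?thesis
    by (rule recursive_cong) (simp add: comp_def map_drop)
qed

lemma decidable_all_le_head:
  assumes "decidable (Suc n) P"
  shows "decidable (Suc n) (\<lambda>xs. \<forall>u\<le>hd xs. P (u # tl xs))"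
proof -
  define v where "v xs = (of_bool (P xs) :: nat)" for xs
  have v: "recursive (Suc n) v"
    using assms unfolding decidable_def v_def .
  have "recursive (0 + n) (\<lambda>xs. v (0 # drop 0 xs))"
    by (rule recursive_subst_head[OF v]) (simp add: recursive_zero)
  moreover have "recursive (2 + n) (\<lambda>ys. v (Suc (ys ! 0) # drop 2 ys))"
    by (rule recursive_subst_head[OF v]) (auto intro: recursive_Suc recursive_proj)
  then have "recursive (Suc (Suc n)) (\<lambda>ys. ys ! 1 * v (Suc (ys ! 0) # drop 2 ys))"
    by (intro recursive_times recursive_proj) simp_all
  ultimately have "recursive (Suc n) (\<lambda>xs. rec_nat (v (0 # tl xs)) (\<lambda>y r. r * v (Suc y # tl xs)) (hd xs))"
    using recursive_rec by fastforce
  moreover have "rec_nat (v (0 # t)) (\<lambda>y r. r * v (Suc y # t)) m = of_bool (\<forall>u\<le>m. P (u # t))"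
    for t m
    by (induct m) (auto simp: v_def le_Suc_eq)
  ultimately show ?thesis
    unfolding decidable_def by (auto intro: recursive_cong)
qed

text \<open>The arity is passed as a separate equation \<open>m = Suc n\<close> so that the lemmas also apply to
  predicates whose arity is written as a numeral.\<close>

lemma decidable_all_le:
  assumes "decidable m P" "m = Suc n" "recursive n b"
    and "\<And>xs u. length xs = n \<Longrightarrow> Q xs u \<longleftrightarrow> P (u # xs)"
  shows "decidable n (\<lambda>xs. \<forall>u\<le>b xs. Q xs u)"
proof -
  have "recursive n (\<lambda>xs. of_bool (\<forall>u\<le>b xs. P (u # xs)))"
    using recursive_subst_head[OF decidable_all_le_head[OF assms(1)[unfolded assms(2)], unfolded decidable_def],
        of 0 b] assms(3) by simp
  then show ?thesis
    unfolding decidable_def by (rule recursive_cong) (simp add: assms(4))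
qed

lemma decidable_ex_le:
  assumes "decidable m P" "m = Suc n" "recursive n b"
    and "\<And>xs u. length xs = n \<Longrightarrow> Q xs u \<longleftrightarrow> P (u # xs)"
  shows "decidable n (\<lambda>xs. \<exists>u\<le>b xs. Q xs u)"
proof -
  have "decidable n (\<lambda>xs. \<not> (\<forall>u\<le>b xs. \<not> Q xs u))"
    by (intro decidable_not decidable_all_le[OF decidable_not[OF assms(1)] assms(2,3)]) (simp add: assms(4))
  then show ?thesis
    by (rule decidable_cong) auto
qed

lemma ce_set_projection:
  assumes "computable1 \<pi>1" "computable1 \<pi>2" "range (\<lambda>i. (\<pi>1 i, \<pi>2 i)) = UNIV"
    and "decidable 2 (\<lambda>xs. R (xs ! 0) (xs ! 1))"
  shows "ce_set {j. \<exists>k. R j k}"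
proof (cases "{j. \<exists>k. R j k} = {}")
  case False
  then obtain j0 k0 where "R j0 k0"
    by blast
  define f where "f x = (if R (\<pi>1 x) (\<pi>2 x) then \<pi>1 x else j0)" for x
  have "recursive 1 (\<lambda>xs. \<pi>1 (xs ! 0))" "recursive 1 (\<lambda>xs. \<pi>2 (xs ! 0))"
    by (rule recursive_computable1[OF assms(1)] recursive_computable1[OF assms(2)], rule recursive_proj, simp)+
  then have "recursive 1 (\<lambda>xs. f (xs ! 0))"
    unfolding f_def
    using recursive_comp[OF assms(4)[unfolded decidable_def], of "[\<lambda>xs. \<pi>1 (xs ! 0), \<lambda>xs. \<pi>2 (xs ! 0)]" 1]
    by (intro recursive_if recursive_const) (simp_all add: decidable_def)
  moreover have "range f = {j. \<exists>k. R j k}"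
  proof (intro equalityI subsetI)
    fix j assume "j \<in> {j. \<exists>k. R j k}"
    then obtain k where "R j k"
      by blast
    have "(j, k) \<in> range (\<lambda>i. (\<pi>1 i, \<pi>2 i))"
      using assms(3) by simp
    then obtain x where "j = \<pi>1 x" "k = \<pi>2 x"
      by blast
    with \<open>R j k\<close> have "j = f x"
      by (simp add: f_def)
    then show "j \<in> range f"
      by (rule range_eqI)
  qed (use \<open>R j0 k0\<close> in \<open>auto simp: f_def\<close>)
  ultimately show ?thesis
    unfolding ce_set_def computable1_iff_recursive by blast
qed (simp add: ce_set_def)

lemma computable2_of_finite_family:
  assumes "\<And>i. i \<in> {1..n} \<Longrightarrow> computable1 (f i)"
  shows "\<exists>F. computable2 F \<and> (\<forall>i\<in>{1..n}. F i = f i)"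
  using assms
proof (induct n)
  case 0
  show ?case
    by (intro exI[of _ "(+)"]) (simp add: computable2_plus)
next
  case (Suc n)
  then obtain F where F: "computable2 F" "\<forall>i\<in>{1..n}. F i = f i"
    by auto
  define F' where "F' i k = (if i = Suc n then f (Suc n) k else F i k)" for i k
  have "recursive 2 (\<lambda>xs. f (Suc n) (xs ! 1))"
    by (rule recursive_computable1[OF Suc.prems]) (auto intro: recursive_proj)
  then have "computable2 F'"
    using F(1) unfolding computable2_iff_recursive F'_def
    by (intro recursive_if decidable_eq recursive_proj recursive_const) auto
  moreover have "\<forall>i\<in>{1..Suc n}. F' i = f i"
    using F(2) by (auto simp: F'_def fun_eq_iff le_Suc_eq)
  ultimately show ?case
    by blast
qed

lemma diff_divide_add_less_iff:
  fixes a b c a' b' c' p :: real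
  assumes "c > 0" "c' > 0" "p > 0"
  shows "(a - b) / c + 2 / p < (a' - b') / c' \<longleftrightarrow> a * c' * p + 2 * c * c' + b' * c * p < a' * c * p + b * c' * p"
proof -
  have "(a - b) / c + 2 / p < (a' - b') / c' \<longleftrightarrow> ((a - b) / c + 2 / p) * (c * c' * p) < ((a' - b') / c') * (c * c' * p)"
    using assms by (intro mult_less_cancel_right_pos[symmetric]) auto
  also have "((a - b) / c + 2 / p) * (c * c' * p) = (a - b) * c' * p + 2 * c * c'"
    using assms by (simp add: field_simps)
  also have "((a' - b') / c') * (c * c' * p) = (a' - b') * c * p"
    using assms by (simp add: field_simps)
  finally show ?thesis
    by (simp add: algebra_simps)
qed

text \<open>A computable real function cannot be compared exactly with a rational, but comparing a
  \<open>2^-k\<close>-approximation of it with a margin of \<open>2 \<cdot> 2^-k\<close> decides a relation that sits between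
  the strict comparisons with margins \<open>2^-k\<close> and \<open>3 \<cdot> 2^-k\<close>.\<close>

lemma ex_decidable_margin_test:
  fixes d :: "nat \<Rightarrow> nat \<Rightarrow> real" and r :: "nat \<Rightarrow> rat"
  assumes "computable_real2 d" "computable_rat1 r"
  shows "\<exists>C. decidable 4 (\<lambda>xs. C (xs ! 0) (xs ! 1) (xs ! 2) (xs ! 3))
    \<and> (\<forall>x y z k. C x y z k \<longrightarrow> d x y + 1 / 2 ^ k < real_of_rat (r z))
    \<and> (\<forall>x y z k. d x y + 3 / 2 ^ k < real_of_rat (r z) \<longrightarrow> C x y z k)"
proof -
  obtain G where G_approx: "\<And>x y k. \<bar>d x y - real_of_rat (G x y k)\<bar> < 1 / 2 ^ k"
    and "computable_rat3 G"
    using assms(1) unfolding computable_real2_def by blast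
  then obtain ga gb gc where ga: "computable3 ga" and gb: "computable3 gb" and gc: "computable3 gc"
    and G: "\<And>x y k. G x y k = (of_nat (ga x y k) - of_nat (gb x y k)) / of_nat (gc x y k + 1)"
    unfolding computable_rat3_def by blast
  obtain ra rb rc where ra: "computable1 ra" and rb: "computable1 rb" and rc: "computable1 rc"
    and r: "\<And>z. r z = (of_nat (ra z) - of_nat (rb z)) / of_nat (rc z + 1)"
    using assms(2) unfolding computable_rat1_def by blast
  define C where "C x y z k \<longleftrightarrow> real_of_rat (G x y k) + 2 / 2 ^ k < real_of_rat (r z)" for x y z k
  \<comment> \<open>Cross-multiplying turns \<open>C\<close> into an inequality between natural-number expressions.\<close>
  have C_nat: "C x y z k \<longleftrightarrow>
      ga x y k * (rc z + 1) * 2 ^ k + 2 * (gc x y k + 1) * (rc z + 1) + rb z * (gc x y k + 1) * 2 ^ k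
      < ra z * (gc x y k + 1) * 2 ^ k + gb x y k * (rc z + 1) * 2 ^ k" for x y z k
  proof -
    have "C x y z k \<longleftrightarrow> (real (ga x y k) - real (gb x y k)) / real (gc x y k + 1) + 2 / real (2 ^ k)
        < (real (ra z) - real (rb z)) / real (rc z + 1)"
      unfolding C_def G r by (simp add: of_rat_divide of_rat_diff of_rat_add)
    also have "\<dots> \<longleftrightarrow> real (ga x y k) * real (rc z + 1) * real (2 ^ k)
        + 2 * real (gc x y k + 1) * real (rc z + 1) + real (rb z) * real (gc x y k + 1) * real (2 ^ k)
        < real (ra z) * real (gc x y k + 1) * real (2 ^ k) + real (gb x y k) * real (rc z + 1) * real (2 ^ k)"
      by (rule diff_divide_add_less_iff) auto
    also have "\<dots> \<longleftrightarrow> real (ga x y k * (rc z + 1) * 2 ^ k + 2 * (gc x y k + 1) * (rc z + 1) + rb z * (gc x y k + 1) * 2 ^ k)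
        < real (ra z * (gc x y k + 1) * 2 ^ k + gb x y k * (rc z + 1) * 2 ^ k)"
      by (simp only: of_nat_add of_nat_mult of_nat_numeral)
    finally show ?thesis
      by (simp only: of_nat_less_iff)
  qed
  have "decidable 4 (\<lambda>xs. C (xs ! 0) (xs ! 1) (xs ! 2) (xs ! 3))"
    unfolding C_nat
    by (intro decidable_less recursive_plus recursive_times recursive_power2 recursive_const
        recursive_computable3[OF ga] recursive_computable3[OF gb] recursive_computable3[OF gc]
        recursive_computable1[OF ra] recursive_computable1[OF rb] recursive_computable1[OF rc]
        recursive_Suc recursive_proj) simp_all
  moreover have "C x y z k \<Longrightarrow> d x y + 1 / 2 ^ k < real_of_rat (r z)"
    and "d x y + 3 / 2 ^ k < real_of_rat (r z) \<Longrightarrow> C x y z k" for x y z k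
    using G_approx[of x y k] unfolding C_def by (simp_all add: abs_less_iff)
  ultimately show ?thesis
    by blast
qed

lemma ex_decidable_ball_test:
  assumes "computable_metric_space \<alpha>" "standard_enums q \<tau>1 \<tau>2 \<sigma> \<eta>"
  shows "\<exists>T. decidable 3 (\<lambda>xs. T (xs ! 0) (xs ! 1) (xs ! 2))
    \<and> (\<forall>x b k. T x b k \<longrightarrow> dist (\<alpha> x) (\<alpha> (\<tau>1 b)) + 1 / 2 ^ k < real_of_rat (q (\<tau>2 b)))
    \<and> (\<forall>x b k. dist (\<alpha> x) (\<alpha> (\<tau>1 b)) + 3 / 2 ^ k < real_of_rat (q (\<tau>2 b)) \<longrightarrow> T x b k)"
proof -
  have "computable_real2 (\<lambda>i j. dist (\<alpha> i) (\<alpha> j))" "computable_rat1 q"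
    and \<tau>: "computable1 \<tau>1" "computable1 \<tau>2"
    using assms unfolding computable_metric_space_def standard_enums_def by blast+
  then obtain C where C: "decidable 4 (\<lambda>xs. C (xs ! 0) (xs ! 1) (xs ! 2) (xs ! 3))"
    and C_sound: "\<forall>x y z k. C x y z k \<longrightarrow> dist (\<alpha> x) (\<alpha> y) + 1 / 2 ^ k < real_of_rat (q z)"
    and C_complete: "\<forall>x y z k. dist (\<alpha> x) (\<alpha> y) + 3 / 2 ^ k < real_of_rat (q z) \<longrightarrow> C x y z k"
    using ex_decidable_margin_test by blast
  have "decidable 3 (\<lambda>xs. C (xs ! 0) (\<tau>1 (xs ! 1)) (\<tau>2 (xs ! 1)) (xs ! 2))"
    using decidable_comp[OF C, of "[\<lambda>xs. xs ! 0, \<lambda>xs. \<tau>1 (xs ! 1), \<lambda>xs. \<tau>2 (xs ! 1), \<lambda>xs. xs ! 2]" 3]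
    by (simp add: recursive_proj recursive_computable1[OF \<tau>(1)] recursive_computable1[OF \<tau>(2)])
  with C_sound C_complete show ?thesis
    by (intro exI[of _ "\<lambda>x b k. C x (\<tau>1 b) (\<tau>2 b) k"]) simp
qed

lemma computable_up_to_uniform:
  assumes "\<And>i. i \<in> {1..n} \<Longrightarrow> computable_up_to \<alpha> \<sigma> \<eta> (A i) S"
  shows "\<exists>F. computable2 F \<and> (\<forall>i\<in>{1..n}. \<forall>k.
    approx_prec (A i) (ptset \<alpha> \<sigma> \<eta> (F i k)) (1 / 2 ^ k) \<and> approx_prec (ptset \<alpha> \<sigma> \<eta> (F i k)) S (1 / 2 ^ k))"
proof -
  obtain f where f: "\<And>i. i \<in> {1..n} \<Longrightarrow> computable1 (f i) \<and> (\<forall>k.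
      approx_prec (A i) (ptset \<alpha> \<sigma> \<eta> (f i k)) (1 / 2 ^ k) \<and> approx_prec (ptset \<alpha> \<sigma> \<eta> (f i k)) S (1 / 2 ^ k))"
    using assms unfolding computable_up_to_def by metis
  then obtain F where "computable2 F" "\<forall>i\<in>{1..n}. F i = f i"
    using computable2_of_finite_family[of n f] by blast
  with f show ?thesis
    by auto
qed

lemma compact_ball_cover_margin:
  fixes c :: "'b \<Rightarrow> 'a::metric_space"
  assumes "compact S" "S \<subseteq> (\<Union>b\<in>B. ball (c b) (r b))"
  shows "\<exists>k. \<forall>s\<in>S. \<exists>b\<in>B. dist s (c b) + 1 / 2 ^ k < r b"
proof -
  define V where "V k = (\<Union>b\<in>B. ball (c b) (r b - 1 / 2 ^ k))" for k :: nat
  have V_open: "open (V k)" for k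
    unfolding V_def by (intro open_UN ballI open_ball)
  have cover: "S \<subseteq> (\<Union>k. V k)"
  proof
    fix s assume "s \<in> S"
    then obtain b where b: "b \<in> B" "dist (c b) s < r b"
      using assms(2) by auto
    then obtain k where "(1 / 2) ^ k < r b - dist (c b) s"
      using real_arch_pow_inv[of "r b - dist (c b) s" "1 / 2"] by auto
    with b have "s \<in> V k"
      unfolding V_def by (auto simp: power_one_over intro!: bexI[of _ b])
    then show "s \<in> (\<Union>k. V k)"
      by blast
  qed
  obtain K where "K \<subseteq> UNIV" "finite K" "S \<subseteq> (\<Union>k\<in>K. V k)"
    by (rule compactE_image[OF assms(1) V_open cover])
  have "\<exists>b\<in>B. dist s (c b) + 1 / 2 ^ Max (insert 0 K) < r b" if "s \<in> S" for s
  proof -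
    obtain k b where "k \<in> K" "b \<in> B" "dist (c b) s < r b - 1 / 2 ^ k"
      using \<open>S \<subseteq> (\<Union>k\<in>K. V k)\<close> \<open>s \<in> S\<close> unfolding V_def by auto
    moreover have "(1 :: real) / 2 ^ Max (insert 0 K) \<le> 1 / 2 ^ k"
      using \<open>k \<in> K\<close> \<open>finite K\<close> by (intro divide_left_mono power_increasing) auto
    ultimately show ?thesis
      by (auto simp: dist_commute intro!: bexI[of _ b])
  qed
  then show ?thesis
    by blast
qed

lemma mem_ptset_iff: "a \<in> ptset \<alpha> \<sigma> \<eta> j \<longleftrightarrow> (\<exists>t\<le>\<eta> j. a = \<alpha> (\<sigma> j t))"
  unfolding ptset_def seqidx_def by auto

lemma mem_ratunion_iff:
  "x \<in> ratunion \<alpha> q \<tau>1 \<tau>2 \<sigma> \<eta> j \<longleftrightarrow> (\<exists>u\<le>\<eta> j. x \<in> ratball \<alpha> q \<tau>1 \<tau>2 (\<sigma> j u))"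
  unfolding ratunion_def seqidx_def by auto

text \<open>With \<open>F i k\<close> a code of the finite set \<open>\<Lambda>\<close> approximating \<open>A i\<close> at precision \<open>2^-k\<close> and
  \<open>T x b k\<close> a test certifying that \<open>\<alpha> x\<close> lies \<open>2^-k\<close>-deep inside the ball \<open>I b\<close>, the following
  relations certify at precision \<open>k\<close> that \<open>S \<subseteq> J j\<close>, respectively that \<open>S\<close> meets \<open>I b\<close>.\<close>

definition certified_cover ::
  "(nat \<Rightarrow> nat \<Rightarrow> nat \<Rightarrow> bool) \<Rightarrow> (nat \<Rightarrow> nat \<Rightarrow> nat) \<Rightarrow> (nat \<Rightarrow> nat) \<Rightarrow> (nat \<Rightarrow> nat \<Rightarrow> nat)
     \<Rightarrow> nat \<Rightarrow> nat \<Rightarrow> nat \<Rightarrow> bool" where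
  "certified_cover T \<sigma> \<eta> F n j k \<longleftrightarrow>
     (\<forall>i\<in>{1..n}. \<forall>t\<le>\<eta> (F i k). \<exists>u\<le>\<eta> j. T (\<sigma> (F i k) t) (\<sigma> j u) k)"

definition certified_meet ::
  "(nat \<Rightarrow> nat \<Rightarrow> nat \<Rightarrow> bool) \<Rightarrow> (nat \<Rightarrow> nat \<Rightarrow> nat) \<Rightarrow> (nat \<Rightarrow> nat) \<Rightarrow> (nat \<Rightarrow> nat \<Rightarrow> nat)
     \<Rightarrow> nat \<Rightarrow> nat \<Rightarrow> nat \<Rightarrow> bool" where
  "certified_meet T \<sigma> \<eta> F n b k \<longleftrightarrow> (\<exists>i\<in>{1..n}. \<exists>t\<le>\<eta> (F i k). T (\<sigma> (F i k) t) b k)"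

lemma decidable_certified_cover:
  assumes T: "decidable 3 (\<lambda>xs. T (xs ! 0) (xs ! 1) (xs ! 2))"
    and F: "computable2 F" and \<sigma>: "computable2 \<sigma>" and \<eta>: "computable1 \<eta>"
  shows "decidable 2 (\<lambda>xs. certified_cover T \<sigma> \<eta> F n (xs ! 0) (xs ! 1))"
proof -
  have "decidable 5 (\<lambda>ws. T (\<sigma> (F (ws ! 2) (ws ! 4)) (ws ! 1)) (\<sigma> (ws ! 3) (ws ! 0)) (ws ! 4))"
    using decidable_comp[OF T, of "[\<lambda>ws. \<sigma> (F (ws ! 2) (ws ! 4)) (ws ! 1), \<lambda>ws. \<sigma> (ws ! 3) (ws ! 0), \<lambda>ws. ws ! 4]"]
    by (simp add: recursive_computable2[OF \<sigma>] recursive_computable2[OF F] recursive_proj)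
  then have "decidable 4 (\<lambda>zs. \<exists>u\<le>\<eta> (zs ! 2). T (\<sigma> (F (zs ! 1) (zs ! 3)) (zs ! 0)) (\<sigma> (zs ! 2) u) (zs ! 3))"
    by (rule decidable_ex_le) (simp_all add: recursive_computable1[OF \<eta>] recursive_proj)
  then have "decidable 3 (\<lambda>ys. \<forall>t\<le>\<eta> (F (ys ! 0) (ys ! 2)).
      \<exists>u\<le>\<eta> (ys ! 1). T (\<sigma> (F (ys ! 0) (ys ! 2)) t) (\<sigma> (ys ! 1) u) (ys ! 2))"
    by (rule decidable_all_le) (simp_all add: recursive_computable1[OF \<eta>] recursive_computable2[OF F] recursive_proj)
  then have "decidable 3 (\<lambda>ys. 1 \<le> ys ! 0 \<longrightarrow> (\<forall>t\<le>\<eta> (F (ys ! 0) (ys ! 2)).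
      \<exists>u\<le>\<eta> (ys ! 1). T (\<sigma> (F (ys ! 0) (ys ! 2)) t) (\<sigma> (ys ! 1) u) (ys ! 2)))"
    by (intro decidable_imp decidable_le recursive_const recursive_proj) simp_all
  then have "decidable 2 (\<lambda>xs. \<forall>i\<le>n. 1 \<le> i \<longrightarrow> (\<forall>t\<le>\<eta> (F i (xs ! 1)).
      \<exists>u\<le>\<eta> (xs ! 0). T (\<sigma> (F i (xs ! 1)) t) (\<sigma> (xs ! 0) u) (xs ! 1)))"
    by (rule decidable_all_le) (auto intro: recursive_const)
  then show ?thesis
    unfolding certified_cover_def by (rule decidable_cong) auto
qed

lemma decidable_certified_meet:
  assumes T: "decidable 3 (\<lambda>xs. T (xs ! 0) (xs ! 1) (xs ! 2))"
    and F: "computable2 F" and \<sigma>: "computable2 \<sigma>" and \<eta>: "computable1 \<eta>"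
  shows "decidable 2 (\<lambda>xs. certified_meet T \<sigma> \<eta> F n (xs ! 0) (xs ! 1))"
proof -
  have "decidable 4 (\<lambda>zs. T (\<sigma> (F (zs ! 1) (zs ! 3)) (zs ! 0)) (zs ! 2) (zs ! 3))"
    using decidable_comp[OF T, of "[\<lambda>zs. \<sigma> (F (zs ! 1) (zs ! 3)) (zs ! 0), \<lambda>zs. zs ! 2, \<lambda>zs. zs ! 3]"]
    by (simp add: recursive_computable2[OF \<sigma>] recursive_computable2[OF F] recursive_proj)
  then have "decidable 3 (\<lambda>ys. \<exists>t\<le>\<eta> (F (ys ! 0) (ys ! 2)). T (\<sigma> (F (ys ! 0) (ys ! 2)) t) (ys ! 1) (ys ! 2))"
    by (rule decidable_ex_le) (simp_all add: recursive_computable1[OF \<eta>] recursive_computable2[OF F] recursive_proj)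
  then have "decidable 3 (\<lambda>ys. 1 \<le> ys ! 0 \<and> (\<exists>t\<le>\<eta> (F (ys ! 0) (ys ! 2)).
      T (\<sigma> (F (ys ! 0) (ys ! 2)) t) (ys ! 1) (ys ! 2)))"
    by (intro decidable_conj decidable_le recursive_const recursive_proj) simp_all
  then have "decidable 2 (\<lambda>xs. \<exists>i\<le>n. 1 \<le> i \<and> (\<exists>t\<le>\<eta> (F i (xs ! 1)).
      T (\<sigma> (F i (xs ! 1)) t) (xs ! 0) (xs ! 1)))"
    by (rule decidable_ex_le) (auto intro: recursive_const)
  then show ?thesis
    unfolding certified_meet_def by (rule decidable_cong) auto
qed

locale approximated_cover =
  fixes \<alpha> :: "nat \<Rightarrow> 'a::metric_space" and q :: "nat \<Rightarrow> rat" and \<tau>1 \<tau>2 :: "nat \<Rightarrow> nat"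
    and \<sigma> :: "nat \<Rightarrow> nat \<Rightarrow> nat" and \<eta> :: "nat \<Rightarrow> nat"
    and S :: "'a set" and A :: "nat \<Rightarrow> 'a set" and n :: nat
    and F :: "nat \<Rightarrow> nat \<Rightarrow> nat" and T :: "nat \<Rightarrow> nat \<Rightarrow> nat \<Rightarrow> bool"
  assumes compact_S: "compact S"
    and S_eq: "S = (\<Union>i\<in>{1..n}. A i)"
    and approx_part: "\<And>i k. i \<in> {1..n} \<Longrightarrow> approx_prec (A i) (ptset \<alpha> \<sigma> \<eta> (F i k)) (1 / 2 ^ k)"
    and approx_whole: "\<And>i k. i \<in> {1..n} \<Longrightarrow> approx_prec (ptset \<alpha> \<sigma> \<eta> (F i k)) S (1 / 2 ^ k)"
    and test_sound: "\<And>x b k. T x b k \<Longrightarrow> dist (\<alpha> x) (\<alpha> (\<tau>1 b)) + 1 / 2 ^ k < real_of_rat (q (\<tau>2 b))"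
    and test_complete:
      "\<And>x b k. dist (\<alpha> x) (\<alpha> (\<tau>1 b)) + 3 / 2 ^ k < real_of_rat (q (\<tau>2 b)) \<Longrightarrow> T x b k"
begin

lemma subset_ratunion_iff: "S \<subseteq> ratunion \<alpha> q \<tau>1 \<tau>2 \<sigma> \<eta> j \<longleftrightarrow> (\<exists>k. certified_cover T \<sigma> \<eta> F n j k)"
proof
  assume "S \<subseteq> ratunion \<alpha> q \<tau>1 \<tau>2 \<sigma> \<eta> j"
  then have "S \<subseteq> (\<Union>b\<in>seqidx \<sigma> \<eta> j. ball (\<alpha> (\<tau>1 b)) (real_of_rat (q (\<tau>2 b))))"
    unfolding ratunion_def ratball_def .
  from compact_ball_cover_margin[OF compact_S this]
  obtain k where margin: "\<And>s. s \<in> S \<Longrightarrow>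
      \<exists>b\<in>seqidx \<sigma> \<eta> j. dist s (\<alpha> (\<tau>1 b)) + 1 / 2 ^ k < real_of_rat (q (\<tau>2 b))"
    by blast
  have "certified_cover T \<sigma> \<eta> F n j (k + 2)"
    unfolding certified_cover_def
  proof (intro ballI allI impI)
    fix i t assume i: "i \<in> {1..n}" and t: "t \<le> \<eta> (F i (k + 2))"
    define a where "a = \<alpha> (\<sigma> (F i (k + 2)) t)"
    have "a \<in> ptset \<alpha> \<sigma> \<eta> (F i (k + 2))"
      unfolding a_def mem_ptset_iff using t by blast
    then obtain s where "s \<in> S" and as: "dist a s < 1 / 2 ^ (k + 2)"
      using approx_whole[OF i] unfolding approx_prec_def by blast
    then obtain b where "b \<in> seqidx \<sigma> \<eta> j" and sb: "dist s (\<alpha> (\<tau>1 b)) + 1 / 2 ^ k < real_of_rat (q (\<tau>2 b))"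
      using margin by blast
    then obtain u where u: "u \<le> \<eta> j" "b = \<sigma> j u"
      unfolding seqidx_def by blast
    have "dist a (\<alpha> (\<tau>1 b)) \<le> dist a s + dist s (\<alpha> (\<tau>1 b))"
      by (rule dist_triangle)
    moreover have "(1 :: real) / 2 ^ k = 4 / 2 ^ (k + 2)"
      by (simp add: power_add)
    ultimately have "dist a (\<alpha> (\<tau>1 b)) + 3 / 2 ^ (k + 2) < real_of_rat (q (\<tau>2 b))"
      using as sb by simp
    then have "T (\<sigma> (F i (k + 2)) t) (\<sigma> j u) (k + 2)"
      unfolding a_def u(2) by (rule test_complete)
    with u(1) show "\<exists>u\<le>\<eta> j. T (\<sigma> (F i (k + 2)) t) (\<sigma> j u) (k + 2)"
      by blast
  qed
  then show "\<exists>k. certified_cover T \<sigma> \<eta> F n j k"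
    by blast
next
  assume "\<exists>k. certified_cover T \<sigma> \<eta> F n j k"
  then obtain k where cover: "certified_cover T \<sigma> \<eta> F n j k"
    by blast
  show "S \<subseteq> ratunion \<alpha> q \<tau>1 \<tau>2 \<sigma> \<eta> j"
  proof
    fix s assume "s \<in> S"
    then obtain i where i: "i \<in> {1..n}" and "s \<in> A i"
      using S_eq by auto
    then obtain a where "a \<in> ptset \<alpha> \<sigma> \<eta> (F i k)" and sa: "dist s a < 1 / 2 ^ k"
      using approx_part[OF i] unfolding approx_prec_def by blast
    then obtain t where t: "t \<le> \<eta> (F i k)" and a: "a = \<alpha> (\<sigma> (F i k) t)"
      unfolding mem_ptset_iff by blast
    then obtain u where u: "u \<le> \<eta> j" and "T (\<sigma> (F i k) t) (\<sigma> j u) k"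
      using cover i unfolding certified_cover_def by blast
    from this(2) have "dist a (\<alpha> (\<tau>1 (\<sigma> j u))) + 1 / 2 ^ k < real_of_rat (q (\<tau>2 (\<sigma> j u)))"
      unfolding a by (rule test_sound)
    moreover have "dist s (\<alpha> (\<tau>1 (\<sigma> j u))) \<le> dist s a + dist a (\<alpha> (\<tau>1 (\<sigma> j u)))"
      by (rule dist_triangle)
    ultimately have "s \<in> ratball \<alpha> q \<tau>1 \<tau>2 (\<sigma> j u)"
      using sa unfolding ratball_def by (simp add: dist_commute)
    with u show "s \<in> ratunion \<alpha> q \<tau>1 \<tau>2 \<sigma> \<eta> j"
      unfolding mem_ratunion_iff by blast
  qed
qed

lemma meets_ratball_iff: "S \<inter> ratball \<alpha> q \<tau>1 \<tau>2 b \<noteq> {} \<longleftrightarrow> (\<exists>k. certified_meet T \<sigma> \<eta> F n b k)"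
proof
  assume "S \<inter> ratball \<alpha> q \<tau>1 \<tau>2 b \<noteq> {}"
  then obtain s where "s \<in> S" and sb: "dist s (\<alpha> (\<tau>1 b)) < real_of_rat (q (\<tau>2 b))"
    unfolding ratball_def by (auto simp: dist_commute)
  then obtain k where k: "(1 / 2) ^ k < (real_of_rat (q (\<tau>2 b)) - dist s (\<alpha> (\<tau>1 b))) / 4"
    using real_arch_pow_inv[of "(real_of_rat (q (\<tau>2 b)) - dist s (\<alpha> (\<tau>1 b))) / 4" "1 / 2"] by auto
  obtain i where i: "i \<in> {1..n}" and "s \<in> A i"
    using S_eq \<open>s \<in> S\<close> by auto
  then obtain a where "a \<in> ptset \<alpha> \<sigma> \<eta> (F i k)" and sa: "dist s a < 1 / 2 ^ k"
    using approx_part[OF i] unfolding approx_prec_def by blast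
  then obtain t where t: "t \<le> \<eta> (F i k)" and a: "a = \<alpha> (\<sigma> (F i k) t)"
    unfolding mem_ptset_iff by blast
  have "dist a (\<alpha> (\<tau>1 b)) \<le> dist s a + dist s (\<alpha> (\<tau>1 b))"
    by (rule dist_triangle3)
  with k sa have "dist a (\<alpha> (\<tau>1 b)) + 3 / 2 ^ k < real_of_rat (q (\<tau>2 b))"
    by (simp add: power_one_over)
  then have "T (\<sigma> (F i k) t) b k"
    unfolding a by (rule test_complete)
  with i t show "\<exists>k. certified_meet T \<sigma> \<eta> F n b k"
    unfolding certified_meet_def by blast
next
  assume "\<exists>k. certified_meet T \<sigma> \<eta> F n b k"
  then obtain k i t where i: "i \<in> {1..n}" and t: "t \<le> \<eta> (F i k)" and "T (\<sigma> (F i k) t) b k"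
    unfolding certified_meet_def by blast
  define a where "a = \<alpha> (\<sigma> (F i k) t)"
  from \<open>T (\<sigma> (F i k) t) b k\<close> have "dist a (\<alpha> (\<tau>1 b)) + 1 / 2 ^ k < real_of_rat (q (\<tau>2 b))"
    unfolding a_def by (rule test_sound)
  moreover have "a \<in> ptset \<alpha> \<sigma> \<eta> (F i k)"
    unfolding a_def mem_ptset_iff using t by blast
  then obtain s where "s \<in> S" and "dist a s < 1 / 2 ^ k"
    using approx_whole[OF i] unfolding approx_prec_def by blast
  moreover have "dist s (\<alpha> (\<tau>1 b)) \<le> dist a s + dist a (\<alpha> (\<tau>1 b))"
    by (rule dist_triangle3)
  ultimately have "s \<in> S \<inter> ratball \<alpha> q \<tau>1 \<tau>2 b"
    unfolding ratball_def by (simp add: dist_commute)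
  then show "S \<inter> ratball \<alpha> q \<tau>1 \<tau>2 b \<noteq> {}"
    by blast
qed

end

theorem proposition4p2:
  fixes \<alpha> :: "nat \<Rightarrow> 'a::metric_space"
    and q :: "nat \<Rightarrow> rat" and \<tau>1 \<tau>2 :: "nat \<Rightarrow> nat"
    and \<sigma> :: "nat \<Rightarrow> nat \<Rightarrow> nat" and \<eta> :: "nat \<Rightarrow> nat"
    and S :: "'a set" and A :: "nat \<Rightarrow> 'a set" and n :: nat
  assumes "computable_metric_space \<alpha>"
    and "standard_enums q \<tau>1 \<tau>2 \<sigma> \<eta>"
    and "compact S"
    and "\<And>i. i \<in> {1..n} \<Longrightarrow> A i \<subseteq> S"
    and "S = (\<Union>i\<in>{1..n}. A i)"
    and "\<And>i. i \<in> {1..n} \<Longrightarrow> computable_up_to \<alpha> \<sigma> \<eta> (A i) S"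
  shows "computable_compact_set \<alpha> q \<tau>1 \<tau>2 \<sigma> \<eta> S"
proof -
  obtain T where T: "decidable 3 (\<lambda>xs. T (xs ! 0) (xs ! 1) (xs ! 2))"
    and "\<forall>x b k. T x b k \<longrightarrow> dist (\<alpha> x) (\<alpha> (\<tau>1 b)) + 1 / 2 ^ k < real_of_rat (q (\<tau>2 b))"
    and "\<forall>x b k. dist (\<alpha> x) (\<alpha> (\<tau>1 b)) + 3 / 2 ^ k < real_of_rat (q (\<tau>2 b)) \<longrightarrow> T x b k"
    using ex_decidable_ball_test[OF assms(1,2)] by blast
  moreover obtain F where F: "computable2 F" and "\<forall>i\<in>{1..n}. \<forall>k.
      approx_prec (A i) (ptset \<alpha> \<sigma> \<eta> (F i k)) (1 / 2 ^ k) \<and> approx_prec (ptset \<alpha> \<sigma> \<eta> (F i k)) S (1 / 2 ^ k)"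
    using computable_up_to_uniform[of n \<alpha> \<sigma> \<eta> A S] assms(6) by blast
  ultimately interpret approximated_cover \<alpha> q \<tau>1 \<tau>2 \<sigma> \<eta> S A n F T
    using assms(3,5) by unfold_locales blast+
  have enums: "computable1 \<tau>1" "computable1 \<tau>2" "range (\<lambda>i. (\<tau>1 i, \<tau>2 i)) = UNIV"
    "computable2 \<sigma>" "computable1 \<eta>"
    using assms(2) unfolding standard_enums_def by blast+
  show ?thesis
    unfolding computable_compact_set_def subset_ratunion_iff meets_ratball_iff
    using assms(3) ce_set_projection[OF enums(1-3)] decidable_certified_cover[OF T F enums(4,5)]
      decidable_certified_meet[OF T F enums(4,5)] by blast
qed

end
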